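(* Let $\phi$ be an $n$-cube USO and let $\psi$ be a kaleidoscope for $\phi$. Let $F\subseteq[2n]$ and let $\psi'$ be the mirror image of $\psi$ along dimensions $F$. Then $\psi'$ contains $\phi$; that is, there exists $V\subseteq\{n+1,\dots,2n\}$ such that $\psi'(U)_L=\phi(U_L)$ for all $U$ with $V\subseteq U\subseteq V\cup[n]$.
   Context: For sets $U,V$ let $U\oplus V=(U\cup V)\setminus(U\cap V)$. An $m$-cube orientation on the vertex set of all subsets of $[m]$ has, for each vertex $V$ and $i\in[m]$, exactly one of the directed edges $V\to V\oplus\{i\}$, $V\oplus\{i\}\to V$; it is identified with its outmap $V\mapsto\{i: V\to V\oplus\{i\}\}$. It is a unique sink orientation (USO) if every face (subgraph induced by an interval $\{X: A\subseteq X\subseteq B\}$) has exactly one sink. For $V\subseteq[2n]$ write $V_L=V\cap[n]$ and $V_H=\{i-n: i\in V\cap\{n+1,\dots,2n\}\}$. A $2n$-cube USO $\psi$ is a kaleidoscope for the $n$-cube USO $\phi$ if $\psi(V)_L=\phi(V_L\oplus V_H)$ for all $V\subseteq[2n]$. For an $m$-cube USO $\psi$ and $F\subseteq[m]$, the mirror image of $\psi$ along dimensions $F$ is the USO $\psi'$ with $\psi'(V)=\psi(V\oplus F)$ for all $V\subseteq[m]$. *)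

theory Defs
  imports Main
begin

text \<open>Vertices of the m-cube are subsets of [m] = {1..m}; an orientation is given by its
outmap, a function from vertex sets to sets of dimensions.\<close>

definition sdiff :: "nat set \<Rightarrow> nat set \<Rightarrow> nat set" where
  "sdiff U V = (U \<union> V) - (U \<inter> V)"

definition cube_orientation :: "nat \<Rightarrow> (nat set \<Rightarrow> nat set) \<Rightarrow> bool" where
  "cube_orientation m psi \<longleftrightarrow> (\<forall>V. V \<subseteq> {1..m} \<longrightarrow> psi V \<subseteq> {1..m})"

text \<open>X is a sink of the face {X. A <= X <= B}: no outgoing edge inside the face.\<close>
definition is_face_sink :: "(nat set \<Rightarrow> nat set) \<Rightarrow> nat set \<Rightarrow> nat set \<Rightarrow> nat set \<Rightarrow> bool" where
  "is_face_sink psi A B X \<longleftrightarrow> A \<subseteq> X \<and> X \<subseteq> B \<and> psi X \<inter> (B - A) = {}"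

definition uso :: "nat \<Rightarrow> (nat set \<Rightarrow> nat set) \<Rightarrow> bool" where
  "uso m psi \<longleftrightarrow> cube_orientation m psi \<and>
     (\<forall>A B. A \<subseteq> B \<and> B \<subseteq> {1..m} \<longrightarrow> (\<exists>!X. is_face_sink psi A B X))"

definition low_part :: "nat \<Rightarrow> nat set \<Rightarrow> nat set" where
  "low_part n V = V \<inter> {1..n}"

definition high_part :: "nat \<Rightarrow> nat set \<Rightarrow> nat set" where
  "high_part n V = (\<lambda>i. i - n) ` (V \<inter> {n+1..2*n})"

definition kaleidoscope :: "nat \<Rightarrow> (nat set \<Rightarrow> nat set) \<Rightarrow> (nat set \<Rightarrow> nat set) \<Rightarrow> bool" where
  "kaleidoscope n phi psi \<longleftrightarrow> uso (2*n) psi \<and>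
     (\<forall>V. V \<subseteq> {1..2*n} \<longrightarrow> low_part n (psi V) = phi (sdiff (low_part n V) (high_part n V)))"

definition mirror :: "nat set \<Rightarrow> (nat set \<Rightarrow> nat set) \<Rightarrow> (nat set \<Rightarrow> nat set)" where
  "mirror F psi = (\<lambda>V. psi (sdiff V F))"

end

theory Submission
  imports Defs
begin

text \<open>Mirroring \<open>\<psi>\<close> along \<open>F\<close> gives
  \<open>\<psi>'(U)\<^sub>L = \<phi>(U\<^sub>L \<oplus> U\<^sub>H \<oplus> F\<^sub>L \<oplus> F\<^sub>H)\<close>, because taking low and high parts
  commutes with \<open>\<oplus>\<close>. On the face of all \<open>U\<close> whose high part is fixed to \<open>F\<^sub>L \<oplus> F\<^sub>H\<close>,
  the last three terms cancel and \<open>\<psi>'(U)\<^sub>L = \<phi>(U\<^sub>L)\<close>.\<close>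

lemma sdiff_sdiff_cancel: "sdiff (sdiff A B) B = A"
  unfolding sdiff_def by auto

lemma sdiff_subset: "A \<subseteq> C \<Longrightarrow> B \<subseteq> C \<Longrightarrow> sdiff A B \<subseteq> C"
  unfolding sdiff_def by auto

lemma mem_high_part_iff: "i \<in> high_part n S \<longleftrightarrow> i \<in> {1..n} \<and> i + n \<in> S"
proof
  assume "i \<in> high_part n S"
  then show "i \<in> {1..n} \<and> i + n \<in> S"
    unfolding high_part_def by auto
next
  assume "i \<in> {1..n} \<and> i + n \<in> S"
  then have "i + n \<in> S \<inter> {n+1..2*n}" "i = (i + n) - n" by auto
  then show "i \<in> high_part n S"
    unfolding high_part_def by blast
qed

lemma high_part_subset: "high_part n S \<subseteq> {1..n}"
  by (auto simp: mem_high_part_iff)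

lemma low_part_sdiff: "low_part n (sdiff U V) = sdiff (low_part n U) (low_part n V)"
  unfolding low_part_def sdiff_def by auto

lemma high_part_sdiff: "high_part n (sdiff U V) = sdiff (high_part n U) (high_part n V)"
  by (rule set_eqI) (simp add: mem_high_part_iff sdiff_def, blast)

lemma high_part_image_add: "G \<subseteq> {1..n} \<Longrightarrow> high_part n ((\<lambda>i. i + n) ` G) = G"
  by (auto simp: mem_high_part_iff)

lemma high_part_face:
  assumes "V \<subseteq> U" "U \<subseteq> V \<union> {1..n}"
  shows "high_part n U = high_part n V"
  using assms by (auto simp: mem_high_part_iff)

lemma low_part_mirror_kaleidoscope:
  assumes "kaleidoscope n phi psi" "F \<subseteq> {1..2*n}" "U \<subseteq> {1..2*n}"
  shows "low_part n (mirror F psi U)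
           = phi (sdiff (sdiff (low_part n U) (high_part n U))
                        (sdiff (low_part n F) (high_part n F)))"
proof -
  have "sdiff U F \<subseteq> {1..2*n}"
    using assms(3,2) by (rule sdiff_subset)
  then have "low_part n (mirror F psi U)
               = phi (sdiff (low_part n (sdiff U F)) (high_part n (sdiff U F)))"
    using assms(1) unfolding kaleidoscope_def mirror_def by blast
  also have "sdiff (low_part n (sdiff U F)) (high_part n (sdiff U F))
               = sdiff (sdiff (low_part n U) (high_part n U))
                       (sdiff (low_part n F) (high_part n F))"
    unfolding low_part_sdiff high_part_sdiff by (auto simp: sdiff_def)
  finally show ?thesis .
qed

theorem lemma6p5:
  fixes n :: nat and phi psi :: "nat set \<Rightarrow> nat set" and F :: "nat set"
  assumes "uso n phi"
    and "kaleidoscope n phi psi"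
    and "F \<subseteq> {1..2*n}"
  shows "\<exists>V. V \<subseteq> {n+1..2*n} \<and>
           (\<forall>U. V \<subseteq> U \<and> U \<subseteq> V \<union> {1..n} \<longrightarrow>
                low_part n (mirror F psi U) = phi (low_part n U))"
proof -
  define G where "G = sdiff (low_part n F) (high_part n F)"
  have G_subset: "G \<subseteq> {1..n}"
    unfolding G_def low_part_def using high_part_subset by (intro sdiff_subset) auto
  define V where "V = (\<lambda>i. i + n) ` G"
  have V_subset: "V \<subseteq> {n+1..2*n}"
    using G_subset unfolding V_def by auto
  have "low_part n (mirror F psi U) = phi (low_part n U)"
    if "V \<subseteq> U" "U \<subseteq> V \<union> {1..n}" for U
  proof -
    have "{n+1..2*n} \<union> {1..n} \<subseteq> {1..2*n}"
      by auto
    with that(2) V_subset have U_subset: "U \<subseteq> {1..2*n}"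
      by blast
    have "high_part n U = G"
      using high_part_face[OF that] high_part_image_add[OF G_subset] by (simp add: V_def)
    then have "low_part n (mirror F psi U) = phi (sdiff (sdiff (low_part n U) G) G)"
      using low_part_mirror_kaleidoscope[OF assms(2,3) U_subset] by (simp only: G_def)
    then show ?thesis
      by (simp only: sdiff_sdiff_cancel)
  qed
  with V_subset show ?thesis
    by (intro exI[of _ V]) simp
qed

end
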